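(* Assume Assumptions A and B. If the solution $S$ of (IVP) exists on $[r_0,\infty)$, then there is $R>r_0$ such that $S$ is monotone on $(R,\infty)$; consequently $s_\infty:=\lim_{r\to\infty}S(r)$ exists (and lies in $[0,1]$).
   Context: Fix an integer $n\ge2$. For $i=1,2$, $g_i(s)=a^{(i)}_0+a^{(i)}_1s^{\alpha^{(i)}_1}+\dots+a^{(i)}_{N_i}s^{\alpha^{(i)}_{N_i}}$ ($s\ge0$) with $N_i\ge0$, $a^{(i)}_0>0$, $a^{(i)}_j\ge0$, real $0<\alpha^{(i)}_1<\dots<\alpha^{(i)}_{N_i}$; $G_i(u)=g_i(|u|)u$ for $u\in\mathbb R$. Assumption A: $f_1,f_2\in C([0,1])\cap C^1((0,1))$, $f_1(0)=0$, $f_2(1)=0$, $f_1'>0$, $f_2'<0$ on $(0,1)$. Assumption B: $p_c'\in C^1((0,1))$, $p_c'>0$ on $(0,1)$. $F_i(S)=1/(p_c'(S)f_i(S))$. Given $r_0>0$, $c_1,c_2\in\mathbb R$, $s_0\in(0,1)$, (IVP) is: $S'(r)=G_2(c_2r^{1-n})F_2(S)-G_1(c_1r^{1-n})F_1(S)$ for $r>r_0$, $S(r_0)=s_0$, $0<S(r)<1$. *)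

theory Defs
  imports "HOL-Analysis.Analysis"
begin

definition gpow :: "nat \<Rightarrow> (nat \<Rightarrow> real) \<Rightarrow> (nat \<Rightarrow> real) \<Rightarrow> real \<Rightarrow> real" where
  "gpow N a \<alpha> s = a 0 + (\<Sum>j=1..N. a j * s powr \<alpha> j)"

definition admissible_g :: "nat \<Rightarrow> (nat \<Rightarrow> real) \<Rightarrow> (nat \<Rightarrow> real) \<Rightarrow> bool" where
  "admissible_g N a \<alpha> \<longleftrightarrow> a 0 > 0 \<and> (\<forall>j\<in>{1..N}. a j \<ge> 0)
     \<and> (N \<ge> 1 \<longrightarrow> \<alpha> 1 > 0) \<and> (\<forall>j\<in>{1..N}. \<forall>k\<in>{1..N}. j < k \<longrightarrow> \<alpha> j < \<alpha> k)"

definition Gfun :: "nat \<Rightarrow> (nat \<Rightarrow> real) \<Rightarrow> (nat \<Rightarrow> real) \<Rightarrow> real \<Rightarrow> real" where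
  "Gfun N a \<alpha> u = gpow N a \<alpha> \<bar>u\<bar> * u"

definition C1_on_01 :: "(real \<Rightarrow> real) \<Rightarrow> (real \<Rightarrow> real) \<Rightarrow> bool" where
  "C1_on_01 f f' \<longleftrightarrow> (\<forall>x\<in>{0<..<1}. (f has_real_derivative f' x) (at x))
     \<and> continuous_on {0<..<1} f'"

text \<open>F_i(S) = 1 / (p_c'(S) f_i(S)).\<close>
definition Ffun :: "(real \<Rightarrow> real) \<Rightarrow> (real \<Rightarrow> real) \<Rightarrow> real \<Rightarrow> real" where
  "Ffun dpc f s = 1 / (dpc s * f s)"

end

theory Submission
  imports Defs
begin

text \<open>For \<open>c\<^sub>2 \<noteq> 0\<close> the right-hand side of the equation is a positive factor times
  \<open>c\<^sub>2 (\<phi>(S) - \<psi>(r))\<close>, where \<open>\<phi> = f\<^sub>1/f\<^sub>2\<close> is strictly increasing on \<open>(0,1)\<close> and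
  \<open>\<psi>(r) = (c\<^sub>1/c\<^sub>2) g\<^sub>1(|c\<^sub>1| u) / g\<^sub>2(|c\<^sub>2| u)\<close> with \<open>u = r powr (1 - n) \<rightarrow> 0\<close>.
  The derivative of a quotient of sums of real powers of \<open>u\<close> has a numerator of the same kind,
  whose lowest power dominates as \<open>u \<rightarrow> 0\<^sup>+\<close>; hence \<open>\<psi>\<close> is eventually monotone.
  Say \<open>\<psi>\<close> is nondecreasing (reflecting \<open>S\<close> covers the other case). While \<open>S\<close> decreases,
  so does \<open>h = \<phi>(S) - \<psi>\<close>; hence for \<open>c\<^sub>2 > 0\<close> the set \<open>h < 0\<close>, and for \<open>c\<^sub>2 < 0\<close> the set
  \<open>h \<le> 0\<close>, is never left once entered. Either the trajectory enters this set or it stays in the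
  complement forever, and in both cases the sign of \<open>S'\<close> is eventually fixed. For \<open>c\<^sub>2 = 0\<close>
  the sign of \<open>S'\<close> is constant. A bounded eventually monotone function converges.\<close>

section \<open>Monotonicity and derivatives\<close>

lemma mono_on_if_deriv_nonneg:
  fixes f :: "real \<Rightarrow> real"
  assumes I: "is_interval I"
    and deriv: "\<And>x. x \<in> I \<Longrightarrow> (f has_real_derivative f' x) (at x)"
    and nonneg: "\<And>x. x \<in> I \<Longrightarrow> 0 \<le> f' x"
  shows "mono_on I f"
proof (rule mono_onI)
  fix x y assume "x \<in> I" "y \<in> I" "x \<le> y"
  have "t \<in> I" if "t \<in> {x..y}" for t
    using mem_is_interval_1_I[OF I \<open>x \<in> I\<close> \<open>y \<in> I\<close>] that by simp
  then show "f x \<le> f y"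
    using deriv nonneg \<open>x \<le> y\<close> by (intro deriv_nonneg_imp_mono[of x y f f']) auto
qed

lemma antimono_on_if_deriv_nonpos:
  fixes f :: "real \<Rightarrow> real"
  assumes I: "is_interval I"
    and deriv: "\<And>x. x \<in> I \<Longrightarrow> (f has_real_derivative f' x) (at x)"
    and nonpos: "\<And>x. x \<in> I \<Longrightarrow> f' x \<le> 0"
  shows "antimono_on I f"
proof (rule monotone_onI)
  fix x y assume "x \<in> I" "y \<in> I" "x \<le> y"
  have "t \<in> I" if "t \<in> {x..y}" for t
    using mem_is_interval_1_I[OF I \<open>x \<in> I\<close> \<open>y \<in> I\<close>] that by simp
  then show "f y \<le> f x"
    using deriv nonpos \<open>x \<le> y\<close> by (intro deriv_nonpos_imp_antimono[of x y f f']) auto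
qed

lemma strict_mono_on_Icc_if_deriv_pos:
  fixes f :: "real \<Rightarrow> real"
  assumes cont: "continuous_on {a..b} f"
    and deriv: "\<And>x. x \<in> {a<..<b} \<Longrightarrow> (f has_real_derivative f' x) (at x)"
    and pos: "\<And>x. x \<in> {a<..<b} \<Longrightarrow> 0 < f' x"
  shows "strict_mono_on {a..b} f"
proof (rule strict_mono_onI)
  fix x y assume "x \<in> {a..b}" "y \<in> {a..b}" "x < y"
  show "f x < f y"
  proof (rule DERIV_pos_imp_increasing_open[OF \<open>x < y\<close>])
    fix t assume "x < t" "t < y"
    then show "\<exists>z. (f has_real_derivative z) (at t) \<and> 0 < z"
      using deriv pos \<open>x \<in> {a..b}\<close> \<open>y \<in> {a..b}\<close> by (intro exI[of _ "f' t"]) auto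
  next
    show "continuous_on {x..y} f"
      using \<open>x \<in> {a..b}\<close> \<open>y \<in> {a..b}\<close> by (intro continuous_on_subset[OF cont]) auto
  qed
qed

lemma strict_mono_on_divide:
  fixes f g :: "real \<Rightarrow> real"
  assumes "strict_mono_on A f" and "strict_mono_on A (\<lambda>x. - g x)"
    and "\<And>x. x \<in> A \<Longrightarrow> 0 < f x" and "\<And>x. x \<in> A \<Longrightarrow> 0 < g x"
  shows "strict_mono_on A (\<lambda>x. f x / g x)"
proof (rule strict_mono_onI)
  fix x y assume "x \<in> A" "y \<in> A" "x < y"
  then have "f x < f y" "g y < g x"
    using assms(1,2) by (auto dest: strict_mono_onD)
  then show "f x / g x < f y / g y"
    using assms(3,4) \<open>x \<in> A\<close> \<open>y \<in> A\<close> by (intro frac_less2) (auto intro: less_imp_le)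
qed

lemma mono_on_uminus_iff: "mono_on A (\<lambda>x. - f x :: real) \<longleftrightarrow> antimono_on A f"
  by (auto simp: monotone_on_def)

lemma antimono_on_uminus_iff: "antimono_on A (\<lambda>x. - f x :: real) \<longleftrightarrow> mono_on A f"
  by (auto simp: monotone_on_def)

lemma mono_or_antimono_comp_antimono:
  fixes \<rho> u :: "real \<Rightarrow> real"
  assumes \<rho>: "mono_on A \<rho> \<or> antimono_on A \<rho>" and u: "antimono_on B u" and "u ` B \<subseteq> A"
  shows "mono_on B (\<lambda>x. \<rho> (u x)) \<or> antimono_on B (\<lambda>x. \<rho> (u x))"
  using \<rho>
proof
  assume "mono_on A \<rho>"
  then have "antimono_on B (\<lambda>x. \<rho> (u x))"
    using u \<open>u ` B \<subseteq> A\<close> by (auto simp: monotone_on_def image_subset_iff)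
  then show ?thesis ..
next
  assume "antimono_on A \<rho>"
  then have "mono_on B (\<lambda>x. \<rho> (u x))"
    using u \<open>u ` B \<subseteq> A\<close> by (auto simp: monotone_on_def image_subset_iff)
  then show ?thesis ..
qed

lemma monotone_if_sgn_deriv_const:
  fixes S S' :: "real \<Rightarrow> real"
  assumes deriv: "\<And>r. R < r \<Longrightarrow> (S has_real_derivative S' r) (at r)"
    and sgn_deriv: "\<And>r. R < r \<Longrightarrow> sgn (S' r) = \<sigma>"
  shows "mono_on {R<..} S \<or> antimono_on {R<..} S"
proof (cases "0 \<le> \<sigma>")
  case True
  then have "0 \<le> S' r" if "R < r" for r
    using sgn_deriv[OF that] by (auto simp: sgn_if split: if_splits)
  then have "mono_on {R<..} S"
    using deriv by (intro mono_on_if_deriv_nonneg[of _ S S']) (auto simp: is_interval_1)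
  then show ?thesis ..
next
  case False
  then have "S' r \<le> 0" if "R < r" for r
    using sgn_deriv[OF that] by (auto simp: sgn_if split: if_splits)
  then have "antimono_on {R<..} S"
    using deriv by (intro antimono_on_if_deriv_nonpos[of _ S S']) (auto simp: is_interval_1)
  then show ?thesis ..
qed

lemma mono_on_tendsto_at_top:
  fixes f :: "real \<Rightarrow> real"
  assumes mono: "mono_on {R<..} f" and bdd: "bdd_above (f ` {R<..})"
  shows "(f \<longlongrightarrow> (SUP r\<in>{R<..}. f r)) at_top"
proof (rule increasing_tendsto)
  show "\<forall>\<^sub>F r in at_top. f r \<le> (SUP r\<in>{R<..}. f r)"
    using eventually_gt_at_top[of R] by (rule eventually_mono) (simp add: cSUP_upper bdd)
next
  fix x assume "x < (SUP r\<in>{R<..}. f r)"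
  then obtain r where "R < r" "x < f r"
    using less_cSUP_iff[OF _ bdd] by auto
  then have "x < f t" if "r \<le> t" for t
    using mono_onD[OF mono, of r t] that by simp
  then show "\<forall>\<^sub>F t in at_top. x < f t"
    by (blast intro: eventually_mono[OF eventually_ge_at_top[of r]])
qed

lemma eventually_monotone_tendsto_at_top:
  fixes f :: "real \<Rightarrow> real"
  assumes mono: "mono_on {R<..} f \<or> antimono_on {R<..} f" and bounds: "\<And>r. R < r \<Longrightarrow> f r \<in> {a..b}"
  shows "\<exists>L\<in>{a..b}. (f \<longlongrightarrow> L) at_top"
proof -
  have "\<exists>L. (f \<longlongrightarrow> L) at_top"
    using mono
  proof
    assume "mono_on {R<..} f"
    moreover have "bdd_above (f ` {R<..})"
      using bounds by (auto intro!: bdd_aboveI[of _ b])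
    ultimately show ?thesis
      by (blast intro: mono_on_tendsto_at_top)
  next
    assume "antimono_on {R<..} f"
    then have "mono_on {R<..} (\<lambda>r. - f r)"
      by (simp add: mono_on_uminus_iff)
    moreover have "bdd_above ((\<lambda>r. - f r) ` {R<..})"
      using bounds by (auto intro!: bdd_aboveI[of _ "- a"])
    ultimately have "((\<lambda>r. - f r) \<longlongrightarrow> (SUP r\<in>{R<..}. - f r)) at_top"
      by (rule mono_on_tendsto_at_top)
    then show ?thesis
      using tendsto_minus_cancel_left by blast
  qed
  then obtain L where L: "(f \<longlongrightarrow> L) at_top" ..
  have "\<forall>\<^sub>F r in at_top. f r \<in> {a..b}"
    using eventually_gt_at_top[of R] by (rule eventually_mono) (use bounds in auto)
  then have "L \<in> {a..b}"
    using L by (auto intro: tendsto_lowerbound tendsto_upperbound elim: eventually_mono)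
  then show ?thesis
    using L by blast
qed

section \<open>Sums of real powers near zero\<close>

lemma powr_sum_tendsto_zero_at_right:
  fixes c e :: "'a \<Rightarrow> real"
  assumes "\<And>i. i \<in> K \<Longrightarrow> 0 < e i"
  shows "((\<lambda>u. \<Sum>i\<in>K. c i * u powr e i) \<longlongrightarrow> 0) (at_right 0)"
proof (intro tendsto_null_sum tendsto_mult_right_zero)
  fix i assume "i \<in> K"
  then show "((\<lambda>u. u powr e i) \<longlongrightarrow> 0) (at_right (0::real))"
    using assms by (intro tendsto_zero_powrI[where b="e i"])
      (auto intro: tendsto_ident_at eventually_mono[OF eventually_at_right_less])
qed

lemma powr_sum_eventually_sgn_leading:
  fixes c e :: "'a \<Rightarrow> real"
  assumes "C \<noteq> 0" and "\<And>i. i \<in> K \<Longrightarrow> m < e i"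
  shows "\<forall>\<^sub>F u in at_right 0. sgn (C * u powr m + (\<Sum>i\<in>K. c i * u powr e i)) = sgn C"
proof -
  have factor: "C * u powr m + (\<Sum>i\<in>K. c i * u powr e i) = u powr m * (C + (\<Sum>i\<in>K. c i * u powr (e i - m)))"
    if "0 < u" for u
    using that by (simp add: sum_distrib_left powr_diff field_simps)
  have lim: "((\<lambda>u. C + (\<Sum>i\<in>K. c i * u powr (e i - m))) \<longlongrightarrow> C + 0) (at_right 0)"
    using assms(2) by (intro tendsto_add tendsto_const powr_sum_tendsto_zero_at_right) simp
  have "\<forall>\<^sub>F u in at_right 0. sgn (C + (\<Sum>i\<in>K. c i * u powr (e i - m))) = sgn C"
    using \<open>C \<noteq> 0\<close> order_tendstoD[OF lim, of 0] by (cases "0 < C") (auto elim: eventually_mono)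
  with eventually_at_right_less show ?thesis
    by eventually_elim (simp add: factor sgn_mult)
qed

lemma powr_sum_eventually_sgn:
  fixes c e :: "'a \<Rightarrow> real"
  assumes "finite I"
  shows "\<exists>\<sigma>. \<forall>\<^sub>F u in at_right 0. sgn (\<Sum>i\<in>I. c i * u powr e i) = \<sigma>"
  using assms
proof (induction "card (e ` I)" arbitrary: I rule: less_induct)
  case less
  show ?case
  proof (cases "I = {}")
    case True
    then show ?thesis by auto
  next
    case False
    define m where "m = Min (e ` I)"
    define K where "K = {i\<in>I. e i \<noteq> m}"
    define C where "C = (\<Sum>i\<in>{i\<in>I. e i = m}. c i)"
    have m_in: "m \<in> e ` I" and m_le: "\<And>i. i \<in> I \<Longrightarrow> m \<le> e i"
      using False less.prems by (simp_all add: m_def)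
    have K_gt: "\<And>i. i \<in> K \<Longrightarrow> m < e i"
      using m_le by (force simp: K_def)
    have split: "(\<Sum>i\<in>I. c i * u powr e i) = C * u powr m + (\<Sum>i\<in>K. c i * u powr e i)" for u
    proof -
      have "I = {i\<in>I. e i = m} \<union> K" by (auto simp: K_def)
      then have "(\<Sum>i\<in>I. c i * u powr e i)
          = (\<Sum>i\<in>{i\<in>I. e i = m}. c i * u powr e i) + (\<Sum>i\<in>K. c i * u powr e i)"
        using less.prems by (subst sum.union_disjoint[symmetric]) (auto simp: K_def)
      then show ?thesis by (simp add: C_def sum_distrib_right)
    qed
    \<comment> \<open>Either the lowest-order terms cancel, leaving fewer distinct exponents, or they dominate.\<close>
    show ?thesis
    proof (cases "C = 0")
      case True
      have "e ` K \<subset> e ` I"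
        using m_in K_gt by (force simp: K_def)
      then have "card (e ` K) < card (e ` I)"
        using less.prems by (intro psubset_card_mono) auto
      moreover have "finite K"
        using less.prems by (simp add: K_def)
      ultimately show ?thesis
        using less.hyps split True by simp
    next
      case False
      then show ?thesis
        using powr_sum_eventually_sgn_leading[where c=c and e=e, OF False K_gt] unfolding split by blast
    qed
  qed
qed

lemma powr_sum_has_real_derivative:
  fixes p e :: "'a \<Rightarrow> real"
  assumes "0 < u"
  shows "((\<lambda>u. \<Sum>j\<in>A. p j * u powr e j) has_real_derivative
          (\<Sum>j\<in>A. p j * (e j * u powr (e j - 1)))) (at u)"
  using assms by (intro DERIV_sum DERIV_cmult has_real_derivative_powr)

lemma powr_sum_deriv_cross_diff:
  fixes p q e d :: "'a \<Rightarrow> real"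
  assumes "0 < u"
  shows "(\<Sum>j\<in>A. p j * (e j * u powr (e j - 1))) * (\<Sum>k\<in>B. q k * u powr d k)
       - (\<Sum>j\<in>A. p j * u powr e j) * (\<Sum>k\<in>B. q k * (d k * u powr (d k - 1)))
       = (\<Sum>(j, k)\<in>A \<times> B. p j * q k * (e j - d k) * u powr (e j + d k - 1))"
proof -
  have "p j * (e j * u powr (e j - 1)) * (q k * u powr d k) - p j * u powr e j * (q k * (d k * u powr (d k - 1)))
      = p j * q k * (e j - d k) * u powr (e j + d k - 1)" for j k
  proof -
    have "u powr (e j + d k - 1) = u powr (e j - 1) * u powr d k"
         "u powr (e j + d k - 1) = u powr e j * u powr (d k - 1)"
      by (simp_all add: powr_add[symmetric] algebra_simps)
    then show ?thesis
      by (simp add: algebra_simps)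
  qed
  then show ?thesis
    by (simp add: sum_product sum_subtractf[symmetric] sum.cartesian_product)
qed

lemma powr_sum_ratio_eventually_monotone:
  fixes p q e d :: "'a \<Rightarrow> real"
  assumes "finite A" and "finite B" and Q_pos: "\<And>u. 0 < u \<Longrightarrow> 0 < (\<Sum>k\<in>B. q k * u powr d k)"
  defines "\<rho> \<equiv> \<lambda>u. (\<Sum>j\<in>A. p j * u powr e j) / (\<Sum>k\<in>B. q k * u powr d k)"
  shows "\<exists>b>0. mono_on {0<..<b} \<rho> \<or> antimono_on {0<..<b} \<rho>"
proof -
  define Q where "Q u = (\<Sum>k\<in>B. q k * u powr d k)" for u :: real
  define N where "N u = (\<Sum>(j, k)\<in>A \<times> B. p j * q k * (e j - d k) * u powr (e j + d k - 1))" for u :: real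
  have deriv: "(\<rho> has_real_derivative N u / (Q u * Q u)) (at u)" if "0 < u" for u
    unfolding \<rho>_def N_def Q_def powr_sum_deriv_cross_diff[OF that, symmetric]
    using Q_pos[OF that] that by (intro DERIV_divide powr_sum_has_real_derivative) auto
  have "finite (A \<times> B)"
    using assms by simp
  from powr_sum_eventually_sgn[OF this, of "\<lambda>(j, k). p j * q k * (e j - d k)" "\<lambda>(j, k). e j + d k - 1"]
  obtain \<sigma> where "\<forall>\<^sub>F u in at_right 0. sgn (N u) = \<sigma>"
    by (auto simp: N_def case_prod_beta)
  then obtain b where "0 < b" and b: "\<And>u. 0 < u \<Longrightarrow> u < b \<Longrightarrow> sgn (N u) = \<sigma>"
    unfolding eventually_at_right_field by auto
  have interval: "is_interval {0<..<b}"
    by (simp add: is_interval_1)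
  show ?thesis
  proof (cases "0 \<le> \<sigma>")
    case True
    have "0 \<le> N u / (Q u * Q u)" if "u \<in> {0<..<b}" for u
      using b[of u] that True by (auto simp: sgn_if split: if_splits)
    then have "mono_on {0<..<b} \<rho>"
      using deriv by (intro mono_on_if_deriv_nonneg[OF interval, of \<rho> "\<lambda>u. N u / (Q u * Q u)"]) auto
    with \<open>0 < b\<close> show ?thesis
      by blast
  next
    case False
    have "N u / (Q u * Q u) \<le> 0" if "u \<in> {0<..<b}" for u
      using b[of u] that False by (auto simp: sgn_if divide_nonpos_nonneg split: if_splits)
    then have "antimono_on {0<..<b} \<rho>"
      using deriv by (intro antimono_on_if_deriv_nonpos[OF interval, of \<rho> "\<lambda>u. N u / (Q u * Q u)"]) auto
    with \<open>0 < b\<close> show ?thesis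
      by blast
  qed
qed

lemma eventually_monotone_comp_powr:
  fixes \<rho> :: "real \<Rightarrow> real"
  assumes "0 < \<epsilon>" and \<rho>: "mono_on {0<..<\<epsilon>} \<rho> \<or> antimono_on {0<..<\<epsilon>} \<rho>" and "e < 0"
  shows "\<forall>\<^sub>F R in at_top. mono_on {R<..} (\<lambda>r. \<rho> (r powr e)) \<or> antimono_on {R<..} (\<lambda>r. \<rho> (r powr e))"
proof -
  have "((\<lambda>r. r powr e) \<longlongrightarrow> 0) at_top"
    using \<open>e < 0\<close> by (intro tendsto_neg_powr filterlim_ident)
  then have "\<forall>\<^sub>F r in at_top. r powr e < \<epsilon>"
    using \<open>0 < \<epsilon>\<close> by (rule order_tendstoD)
  then obtain R1 where R1: "\<And>r. R1 \<le> r \<Longrightarrow> r powr e < \<epsilon>"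
    unfolding eventually_at_top_linorder by blast
  have "mono_on {R<..} (\<lambda>r. \<rho> (r powr e)) \<or> antimono_on {R<..} (\<lambda>r. \<rho> (r powr e))"
    if "max R1 0 \<le> R" for R
  proof (rule mono_or_antimono_comp_antimono[OF \<rho>])
    show "antimono_on {R<..} (\<lambda>r. r powr e)"
      using that \<open>e < 0\<close> by (intro monotone_onI powr_mono2') auto
    show "(\<lambda>r. r powr e) ` {R<..} \<subseteq> {0<..<\<epsilon>}"
      using R1 that by force
  qed
  then show ?thesis
    unfolding eventually_at_top_linorder by blast
qed

section \<open>Trajectories obeying a sign law\<close>

lemma compact_Icc_Collect_le:
  fixes f g :: "real \<Rightarrow> real"
  assumes "continuous_on {a..b} f" and "continuous_on {a..b} g"
  shows "compact {t \<in> {a..b}. f t \<le> g t}"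
proof -
  have "closed {t \<in> {a..b}. f t \<le> g t}"
    using assms by (intro continuous_on_closed_Collect_le) auto
  moreover have "bounded {t \<in> {a..b}. f t \<le> g t}"
    by (rule bounded_subset[OF bounded_closed_interval]) auto
  ultimately show ?thesis
    by (simp add: compact_eq_bounded_closed)
qed

lemma negative_persists:
  fixes h :: "real \<Rightarrow> real"
  assumes cont: "continuous_on {a..b} h" and "a \<le> b" and "h a < 0"
    and drop: "\<And>y. a < y \<Longrightarrow> y \<le> b \<Longrightarrow> (\<forall>t\<in>{a..<y}. h t < 0) \<Longrightarrow> h y < h a"
  shows "h b < 0"
proof (rule ccontr)
  assume "\<not> h b < 0"
  define Z where "Z = {t \<in> {a..b}. 0 \<le> h t}"
  have "compact Z"
    unfolding Z_def using cont by (intro compact_Icc_Collect_le continuous_on_const)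
  moreover have "b \<in> Z"
    using \<open>a \<le> b\<close> \<open>\<not> h b < 0\<close> by (simp add: Z_def)
  ultimately obtain y where "y \<in> Z" and first: "\<And>t. t \<in> Z \<Longrightarrow> y \<le> t"
    using compact_attains_inf[of Z] by blast
  have "a < y" "y \<le> b" "0 \<le> h y"
    using \<open>y \<in> Z\<close> \<open>h a < 0\<close> by (auto simp: Z_def less_eq_real_def)
  moreover have "h t < 0" if "t \<in> {a..<y}" for t
    using first[of t] that \<open>y \<le> b\<close> by (force simp: Z_def)
  ultimately show False
    using drop[of y] \<open>h a < 0\<close> by auto
qed

lemma nonpositive_persists:
  fixes h :: "real \<Rightarrow> real"
  assumes cont: "continuous_on {a..b} h" and "a \<le> b" and "h a \<le> 0"
    and drop: "\<And>x. a \<le> x \<Longrightarrow> x < b \<Longrightarrow> (\<forall>t\<in>{x<..b}. 0 < h t) \<Longrightarrow> h b < h x"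
  shows "h b \<le> 0"
proof (rule ccontr)
  assume "\<not> h b \<le> 0"
  define Z where "Z = {t \<in> {a..b}. h t \<le> 0}"
  have "compact Z"
    unfolding Z_def using cont by (intro compact_Icc_Collect_le continuous_on_const)
  moreover have "a \<in> Z"
    using \<open>a \<le> b\<close> \<open>h a \<le> 0\<close> by (simp add: Z_def)
  ultimately obtain x where "x \<in> Z" and last: "\<And>t. t \<in> Z \<Longrightarrow> t \<le> x"
    using compact_attains_sup[of Z] by blast
  have "a \<le> x" "x < b" "h x \<le> 0"
    using \<open>x \<in> Z\<close> \<open>\<not> h b \<le> 0\<close> by (auto simp: Z_def less_eq_real_def)
  moreover have "0 < h t" if "t \<in> {x<..b}" for t
    using last[of t] that \<open>a \<le> x\<close> by (force simp: Z_def)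
  ultimately show False
    using drop[of x] \<open>\<not> h b \<le> 0\<close> by auto
qed

lemma eventually_monotone_if_sgn_deriv_eq:
  fixes S S' h :: "real \<Rightarrow> real"
  assumes deriv: "\<And>r. R < r \<Longrightarrow> (S has_real_derivative S' r) (at r)"
    and cont: "continuous_on {R<..} h"
    and sgn_eq: "\<And>r. R < r \<Longrightarrow> sgn (S' r) = sgn (h r)"
    and drop: "\<And>x y. R < x \<Longrightarrow> x < y \<Longrightarrow> (\<And>t. x < t \<Longrightarrow> t < y \<Longrightarrow> S' t < 0) \<Longrightarrow> h y < h x"
  shows "\<exists>R'\<ge>R. mono_on {R'<..} S \<or> antimono_on {R'<..} S"
proof -
  have S'_neg_iff: "S' r < 0 \<longleftrightarrow> h r < 0" if "R < r" for r
    using sgn_eq[OF that] by (auto simp: sgn_if split: if_splits)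
  show ?thesis
  proof (cases "\<forall>r>R. 0 \<le> h r")
    case True
    then have "0 \<le> S' r" if "R < r" for r
      using S'_neg_iff[OF that] that by (auto simp: not_less[symmetric])
    then have "mono_on {R<..} S"
      using deriv by (intro mono_on_if_deriv_nonneg[of _ S S']) (auto simp: is_interval_1)
    then show ?thesis
      by blast
  next
    case False
    then obtain r1 where "R < r1" "h r1 < 0"
      by (auto simp: not_le)
    have S'_nonpos: "S' r \<le> 0" if "r1 < r" for r
    proof -
      have "h r < 0"
      proof (rule negative_persists[where h=h, OF _ less_imp_le[OF that] \<open>h r1 < 0\<close>])
        show "continuous_on {r1..r} h"
          using \<open>R < r1\<close> by (intro continuous_on_subset[OF cont]) auto
        fix y assume "r1 < y" "\<forall>t\<in>{r1..<y}. h t < 0"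
        then show "h y < h r1"
          using \<open>R < r1\<close> S'_neg_iff by (intro drop) auto
      qed
      then show ?thesis
        using S'_neg_iff[of r] \<open>R < r1\<close> that by simp
    qed
    have "antimono_on {r1<..} S"
      using deriv S'_nonpos \<open>R < r1\<close> by (intro antimono_on_if_deriv_nonpos[of _ S S']) (auto simp: is_interval_1)
    then show ?thesis
      using \<open>R < r1\<close> by (blast intro: less_imp_le)
  qed
qed

lemma eventually_monotone_if_sgn_deriv_opposite:
  fixes S S' h :: "real \<Rightarrow> real"
  assumes deriv: "\<And>r. R < r \<Longrightarrow> (S has_real_derivative S' r) (at r)"
    and cont: "continuous_on {R<..} h"
    and sgn_opp: "\<And>r. R < r \<Longrightarrow> sgn (S' r) = - sgn (h r)"
    and drop: "\<And>x y. R < x \<Longrightarrow> x < y \<Longrightarrow> (\<And>t. x < t \<Longrightarrow> t < y \<Longrightarrow> S' t < 0) \<Longrightarrow> h y < h x"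
  shows "\<exists>R'\<ge>R. mono_on {R'<..} S \<or> antimono_on {R'<..} S"
proof -
  have S'_neg_iff: "S' r < 0 \<longleftrightarrow> 0 < h r" if "R < r" for r
    using sgn_opp[OF that] by (auto simp: sgn_if split: if_splits)
  show ?thesis
  proof (cases "\<forall>r>R. 0 < h r")
    case True
    then have "S' r \<le> 0" if "R < r" for r
      using S'_neg_iff[OF that] that by auto
    then have "antimono_on {R<..} S"
      using deriv by (intro antimono_on_if_deriv_nonpos[of _ S S']) (auto simp: is_interval_1)
    then show ?thesis
      by blast
  next
    case False
    then obtain r1 where "R < r1" "h r1 \<le> 0"
      by (auto simp: not_less)
    have S'_nonneg: "0 \<le> S' r" if "r1 < r" for r
    proof -
      have "h r \<le> 0"
      proof (rule nonpositive_persists[where h=h, OF _ less_imp_le[OF that] \<open>h r1 \<le> 0\<close>])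
        show "continuous_on {r1..r} h"
          using \<open>R < r1\<close> by (intro continuous_on_subset[OF cont]) auto
        fix x assume "r1 \<le> x" "x < r" "\<forall>t\<in>{x<..r}. 0 < h t"
        then show "h r < h x"
          using \<open>R < r1\<close> S'_neg_iff by (intro drop) auto
      qed
      then show ?thesis
        using S'_neg_iff[of r] \<open>R < r1\<close> that by (auto simp: not_less[symmetric])
    qed
    have "mono_on {r1<..} S"
      using deriv S'_nonneg \<open>R < r1\<close> by (intro mono_on_if_deriv_nonneg[of _ S S']) (auto simp: is_interval_1)
    then show ?thesis
      using \<open>R < r1\<close> by (blast intro: less_imp_le)
  qed
qed

lemma strict_mono_comp_diff_decreasing:
  fixes S S' \<phi> \<psi> :: "real \<Rightarrow> real"
  assumes deriv: "\<And>r. R < r \<Longrightarrow> (S has_real_derivative S' r) (at r)"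
    and \<phi>: "strict_mono_on D \<phi>" and S_in: "\<And>r. R < r \<Longrightarrow> S r \<in> D"
    and \<psi>: "mono_on {R<..} \<psi>"
    and "R < x" and "x < y" and S'_neg: "\<And>t. x < t \<Longrightarrow> t < y \<Longrightarrow> S' t < 0"
  shows "\<phi> (S y) - \<psi> y < \<phi> (S x) - \<psi> x"
proof -
  have "continuous_on {x..y} S"
    using deriv \<open>R < x\<close> by (intro has_real_derivative_imp_continuous_on[where f'=S']) auto
  then have "S y < S x"
  proof (rule DERIV_neg_imp_decreasing_open[OF \<open>x < y\<close>, rotated])
    fix t assume "x < t" "t < y"
    then show "\<exists>z. (S has_real_derivative z) (at t) \<and> z < 0"
      using deriv S'_neg \<open>R < x\<close> by (intro exI[of _ "S' t"]) auto
  qed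
  then have "\<phi> (S y) < \<phi> (S x)"
    using \<phi> S_in \<open>R < x\<close> \<open>x < y\<close> by (auto intro: strict_mono_onD)
  moreover have "\<psi> x \<le> \<psi> y"
    using \<psi> \<open>R < x\<close> \<open>x < y\<close> by (auto intro: mono_onD)
  ultimately show ?thesis
    by simp
qed

lemma eventually_monotone_if_sgn_deriv_mono:
  fixes S S' \<phi> \<psi> :: "real \<Rightarrow> real"
  assumes deriv: "\<And>r. R < r \<Longrightarrow> (S has_real_derivative S' r) (at r)"
    and \<phi>: "strict_mono_on D \<phi>" and S_in: "\<And>r. R < r \<Longrightarrow> S r \<in> D"
    and \<psi>: "mono_on {R<..} \<psi>"
    and cont: "continuous_on {R<..} (\<lambda>r. \<phi> (S r) - \<psi> r)"
    and sgn_deriv: "\<And>r. R < r \<Longrightarrow> sgn (S' r) = \<sigma> * sgn (\<phi> (S r) - \<psi> r)"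
    and \<sigma>: "\<sigma> = 1 \<or> \<sigma> = -1"
  shows "\<exists>R'\<ge>R. mono_on {R'<..} S \<or> antimono_on {R'<..} S"
  using \<sigma>
proof
  assume "\<sigma> = 1"
  then show ?thesis
    using sgn_deriv by (intro eventually_monotone_if_sgn_deriv_eq[OF deriv cont]
        strict_mono_comp_diff_decreasing[OF deriv \<phi> S_in \<psi>]) auto
next
  assume "\<sigma> = -1"
  then show ?thesis
    using sgn_deriv by (intro eventually_monotone_if_sgn_deriv_opposite[OF deriv cont]
        strict_mono_comp_diff_decreasing[OF deriv \<phi> S_in \<psi>]) auto
qed

lemma eventually_monotone_if_sgn_deriv:
  fixes S S' \<phi> \<psi> :: "real \<Rightarrow> real"
  assumes deriv: "\<And>r. R < r \<Longrightarrow> (S has_real_derivative S' r) (at r)"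
    and \<phi>: "strict_mono_on D \<phi>" and S_in: "\<And>r. R < r \<Longrightarrow> S r \<in> D"
    and \<psi>: "mono_on {R<..} \<psi> \<or> antimono_on {R<..} \<psi>"
    and cont: "continuous_on {R<..} (\<lambda>r. \<phi> (S r) - \<psi> r)"
    and sgn_deriv: "\<And>r. R < r \<Longrightarrow> sgn (S' r) = \<sigma> * sgn (\<phi> (S r) - \<psi> r)"
    and \<sigma>: "\<sigma> = 1 \<or> \<sigma> = -1"
  shows "\<exists>R'\<ge>R. mono_on {R'<..} S \<or> antimono_on {R'<..} S"
  using \<psi>
proof
  assume "mono_on {R<..} \<psi>"
  then show ?thesis
    using eventually_monotone_if_sgn_deriv_mono[OF deriv \<phi> S_in _ cont sgn_deriv \<sigma>] by blast
next
  assume "antimono_on {R<..} \<psi>"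
  \<comment> \<open>Reflection: \<open>-S\<close> obeys the same sign law with \<open>x \<mapsto> -\<phi> (-x)\<close> and the monotone \<open>-\<psi>\<close>.\<close>
  have "\<exists>R'\<ge>R. mono_on {R'<..} (\<lambda>r. - S r) \<or> antimono_on {R'<..} (\<lambda>r. - S r)"
  proof (rule eventually_monotone_if_sgn_deriv_mono[where D="uminus ` D" and \<phi>="\<lambda>x. - \<phi> (- x)"
        and \<psi>="\<lambda>r. - \<psi> r" and S'="\<lambda>r. - S' r" and \<sigma>=\<sigma>])
    show "strict_mono_on (uminus ` D) (\<lambda>x. - \<phi> (- x))"
      using \<phi> by (auto simp: monotone_on_def)
    show "mono_on {R<..} (\<lambda>r. - \<psi> r)"
      using \<open>antimono_on {R<..} \<psi>\<close> by (simp add: mono_on_uminus_iff)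
    show "continuous_on {R<..} (\<lambda>r. - \<phi> (- (- S r)) - - \<psi> r)"
      using continuous_on_minus[OF cont] by simp
    have "sgn (\<psi> r - \<phi> (S r)) = - sgn (\<phi> (S r) - \<psi> r)" for r
      by (metis minus_diff_eq sgn_minus)
    then show "sgn (- S' r) = \<sigma> * sgn (- \<phi> (- (- S r)) - - \<psi> r)" if "R < r" for r
      using sgn_deriv[OF that] by (simp add: sgn_minus)
  qed (use deriv S_in \<sigma> in \<open>auto intro: DERIV_minus\<close>)
  then show ?thesis
    by (simp add: mono_on_uminus_iff antimono_on_uminus_iff disj_commute)
qed

section \<open>The initial value problem\<close>

lemma gpow_pos:
  assumes "admissible_g N a \<alpha>" and "0 \<le> s"
  shows "0 < gpow N a \<alpha> s"
proof -
  have "0 \<le> (\<Sum>j=1..N. a j * s powr \<alpha> j)"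
    using assms by (intro sum_nonneg) (auto simp: admissible_g_def)
  then show ?thesis
    using assms by (simp add: gpow_def admissible_g_def)
qed

lemma sgn_Gfun:
  assumes "admissible_g N a \<alpha>"
  shows "sgn (Gfun N a \<alpha> u) = sgn u"
  using gpow_pos[OF assms abs_ge_zero] by (simp add: Gfun_def sgn_mult)

lemma admissible_g_exponent_pos:
  assumes "admissible_g N a \<alpha>" and "j \<in> {1..N}"
  shows "0 < \<alpha> j"
proof (cases "j = 1")
  case False
  then have "\<alpha> 1 < \<alpha> j"
    using assms by (auto simp: admissible_g_def)
  then show ?thesis
    using assms by (simp add: admissible_g_def)
qed (use assms in \<open>simp add: admissible_g_def\<close>)

lemma continuous_on_gpow:
  assumes "admissible_g N a \<alpha>"
  shows "continuous_on {0..} (gpow N a \<alpha>)"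
  unfolding gpow_def using admissible_g_exponent_pos[OF assms]
  by (intro continuous_intros continuous_on_powr') auto

lemma gpow_scaled_eq_powr_sum:
  assumes "0 \<le> k" and "0 < v"
  shows "gpow N a \<alpha> (k * v) = (\<Sum>j=0..N. (if j = 0 then a 0 else a j * k powr \<alpha> j) * v powr (if j = 0 then 0 else \<alpha> j))"
proof -
  have "(\<Sum>j=1..N. a j * (k * v) powr \<alpha> j)
      = (\<Sum>j=1..N. (if j = 0 then a 0 else a j * k powr \<alpha> j) * v powr (if j = 0 then 0 else \<alpha> j))"
    using assms by (intro sum.cong) (auto simp: powr_mult)
  moreover have "{0..N} = insert 0 {1..N}"
    by auto
  ultimately show ?thesis
    using assms by (simp add: gpow_def)
qed

lemma gpow_ratio_eventually_monotone:
  fixes c k l :: real and N :: nat and a \<alpha> :: "nat \<Rightarrow> real"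
  assumes "admissible_g M b \<beta>" and "0 \<le> k" and "0 \<le> l"
  defines "\<rho> \<equiv> \<lambda>v. c * (gpow N a \<alpha> (k * v) / gpow M b \<beta> (l * v))"
  shows "\<exists>\<epsilon>>0. mono_on {0<..<\<epsilon>} \<rho> \<or> antimono_on {0<..<\<epsilon>} \<rho>"
proof -
  define coeff where "coeff a' \<alpha>' k' j = (if j = 0 then a' 0 else a' j * k' powr \<alpha>' j)"
    for a' \<alpha>' :: "nat \<Rightarrow> real" and k' :: real and j :: nat
  define ex where "ex \<alpha>' j = (if j = 0 then 0 else \<alpha>' j)" for \<alpha>' :: "nat \<Rightarrow> real" and j :: nat
  define \<rho>' where "\<rho>' v = (\<Sum>j=0..N. c * coeff a \<alpha> k j * v powr ex \<alpha> j)
      / (\<Sum>j=0..M. coeff b \<beta> l j * v powr ex \<beta> j)" for v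
  have "0 < (\<Sum>j=0..M. coeff b \<beta> l j * v powr ex \<beta> j)" if "0 < v" for v
    using gpow_pos[OF assms(1), of "l * v"] gpow_scaled_eq_powr_sum[OF \<open>0 \<le> l\<close> that] that \<open>0 \<le> l\<close>
    by (simp add: coeff_def ex_def)
  then obtain \<epsilon> where "0 < \<epsilon>" and \<epsilon>: "mono_on {0<..<\<epsilon>} \<rho>' \<or> antimono_on {0<..<\<epsilon>} \<rho>'"
    using powr_sum_ratio_eventually_monotone[where A="{0..N}" and B="{0..M}"
        and p="\<lambda>j. c * coeff a \<alpha> k j" and e="ex \<alpha>" and q="coeff b \<beta> l" and d="ex \<beta>"]
    unfolding \<rho>'_def by auto
  have "\<rho>' v = \<rho> v" if "0 < v" for v
    using gpow_scaled_eq_powr_sum[OF \<open>0 \<le> k\<close> that] gpow_scaled_eq_powr_sum[OF \<open>0 \<le> l\<close> that]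
    by (simp add: \<rho>'_def \<rho>_def coeff_def ex_def sum_distrib_left mult.assoc)
  then have "mono_on {0<..<\<epsilon>} \<rho>' = mono_on {0<..<\<epsilon>} \<rho>"
    "antimono_on {0<..<\<epsilon>} \<rho>' = antimono_on {0<..<\<epsilon>} \<rho>"
    by (auto simp: monotone_on_def)
  then show ?thesis
    using \<open>0 < \<epsilon>\<close> \<epsilon> by auto
qed

lemma gpow_ratio_powr_eventually_monotone:
  fixes c k l e :: real and N :: nat and a \<alpha> :: "nat \<Rightarrow> real"
  assumes "admissible_g M b \<beta>" and "0 \<le> k" and "0 \<le> l" and "e < 0"
  defines "\<psi> \<equiv> \<lambda>r. c * (gpow N a \<alpha> (k * r powr e) / gpow M b \<beta> (l * r powr e))"
  shows "\<forall>\<^sub>F R in at_top. mono_on {R<..} \<psi> \<or> antimono_on {R<..} \<psi>"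
proof -
  obtain \<epsilon> where "0 < \<epsilon>"
    and "mono_on {0<..<\<epsilon>} (\<lambda>v. c * (gpow N a \<alpha> (k * v) / gpow M b \<beta> (l * v)))
      \<or> antimono_on {0<..<\<epsilon>} (\<lambda>v. c * (gpow N a \<alpha> (k * v) / gpow M b \<beta> (l * v)))"
    using gpow_ratio_eventually_monotone[OF assms(1-3)] by blast
  from eventually_monotone_comp_powr[OF this \<open>e < 0\<close>] show ?thesis
    unfolding \<psi>_def .
qed

lemma continuous_on_gpow_ratio_powr:
  assumes "admissible_g N a \<alpha>" and "admissible_g M b \<beta>" and "0 \<le> k" and "0 \<le> l"
  shows "continuous_on {0<..} (\<lambda>r. c * (gpow N a \<alpha> (k * r powr e) / gpow M b \<beta> (l * r powr e)))"
  using assms gpow_pos[OF assms(2)]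
  by (intro continuous_intros continuous_on_compose2[OF continuous_on_gpow[OF assms(1)]]
      continuous_on_compose2[OF continuous_on_gpow[OF assms(2)]]) (auto intro!: less_imp_neq[symmetric])

lemma sgn_ivp_rhs:
  assumes "admissible_g N2 a2 \<alpha>2" and "c2 \<noteq> 0" and "0 < v"
    and "0 < dpc s" and "0 < f1 s" and "0 < f2 s"
  shows "sgn (Gfun N2 a2 \<alpha>2 (c2 * v) * Ffun dpc f2 s - Gfun N1 a1 \<alpha>1 (c1 * v) * Ffun dpc f1 s)
    = sgn c2 * sgn (f1 s / f2 s - c1 / c2 * (gpow N1 a1 \<alpha>1 (\<bar>c1\<bar> * v) / gpow N2 a2 \<alpha>2 (\<bar>c2\<bar> * v)))"
proof -
  define G1 where "G1 = gpow N1 a1 \<alpha>1 (\<bar>c1\<bar> * v)"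
  define G2 where "G2 = gpow N2 a2 \<alpha>2 (\<bar>c2\<bar> * v)"
  define K where "K = G2 * v / (dpc s * f1 s)"
  have "0 < G2"
    unfolding G2_def using assms by (intro gpow_pos) auto
  then have "0 < K"
    using assms by (simp add: K_def)
  have "Gfun N2 a2 \<alpha>2 (c2 * v) * Ffun dpc f2 s - Gfun N1 a1 \<alpha>1 (c1 * v) * Ffun dpc f1 s
      = K * (c2 * (f1 s / f2 s - c1 / c2 * (G1 / G2)))"
    using assms \<open>0 < G2\<close> by (simp add: Gfun_def Ffun_def K_def G1_def G2_def abs_mult field_simps)
  also have "sgn \<dots> = sgn K * (sgn c2 * sgn (f1 s / f2 s - c1 / c2 * (G1 / G2)))"
    by (simp only: sgn_mult)
  finally show ?thesis
    using \<open>0 < K\<close> by (simp add: G1_def G2_def)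
qed

lemma ivp_eventually_monotone_if_c2_neq_0:
  fixes S f1 f2 dpc :: "real \<Rightarrow> real"
  assumes g1: "admissible_g N1 a1 \<alpha>1" and g2: "admissible_g N2 a2 \<alpha>2"
    and "c2 \<noteq> 0" and "e < 0" and "0 \<le> r0"
    and pos: "\<And>s. s \<in> {0<..<1} \<Longrightarrow> 0 < dpc s \<and> 0 < f1 s \<and> 0 < f2 s"
    and \<phi>_mono: "strict_mono_on {0<..<1} (\<lambda>s. f1 s / f2 s)"
    and \<phi>_cont: "continuous_on {0<..<1} (\<lambda>s. f1 s / f2 s)"
    and S_in: "\<And>r. r0 < r \<Longrightarrow> S r \<in> {0<..<1}"
    and deriv: "\<And>r. r0 < r \<Longrightarrow> (S has_real_derivative
        Gfun N2 a2 \<alpha>2 (c2 * r powr e) * Ffun dpc f2 (S r) - Gfun N1 a1 \<alpha>1 (c1 * r powr e) * Ffun dpc f1 (S r)) (at r)"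
  shows "\<exists>R>r0. mono_on {R<..} S \<or> antimono_on {R<..} S"
proof -
  define S' where "S' r = Gfun N2 a2 \<alpha>2 (c2 * r powr e) * Ffun dpc f2 (S r)
      - Gfun N1 a1 \<alpha>1 (c1 * r powr e) * Ffun dpc f1 (S r)" for r
  define \<psi> where "\<psi> r = c1 / c2 * (gpow N1 a1 \<alpha>1 (\<bar>c1\<bar> * r powr e) / gpow N2 a2 \<alpha>2 (\<bar>c2\<bar> * r powr e))"
    for r
  obtain R0 where R0: "\<And>R. R0 \<le> R \<Longrightarrow> mono_on {R<..} \<psi> \<or> antimono_on {R<..} \<psi>"
    using gpow_ratio_powr_eventually_monotone[OF g2 abs_ge_zero abs_ge_zero \<open>e < 0\<close>]
    unfolding \<psi>_def[abs_def] eventually_at_top_linorder by blast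
  define R where "R = max R0 r0 + 1"
  have "r0 < R" and \<psi>_mono: "mono_on {R<..} \<psi> \<or> antimono_on {R<..} \<psi>"
    using R0 by (simp_all add: R_def)
  have deriv_R: "(S has_real_derivative S' r) (at r)" and S_in_R: "S r \<in> {0<..<1}" if "R < r" for r
    using deriv S_in \<open>r0 < R\<close> that by (simp_all add: S'_def)
  have "continuous_on {R<..} S"
    using deriv_R by (rule has_real_derivative_imp_continuous_on) simp
  then have "continuous_on {R<..} (\<lambda>r. f1 (S r) / f2 (S r))"
    using S_in_R by (intro continuous_on_compose2[OF \<phi>_cont]) auto
  moreover have "continuous_on {R<..} \<psi>"
    unfolding \<psi>_def using \<open>0 \<le> r0\<close> \<open>r0 < R\<close>
    by (intro continuous_on_subset[OF continuous_on_gpow_ratio_powr[OF g1 g2]]) auto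
  ultimately have cont: "continuous_on {R<..} (\<lambda>r. f1 (S r) / f2 (S r) - \<psi> r)"
    by (rule continuous_on_diff)
  have sgn_law: "sgn (S' r) = sgn c2 * sgn (f1 (S r) / f2 (S r) - \<psi> r)" if "R < r" for r
  proof -
    have "0 < r powr e"
      using \<open>0 \<le> r0\<close> \<open>r0 < R\<close> that by simp
    then show ?thesis
      unfolding S'_def \<psi>_def using pos[OF S_in_R[OF that]]
      by (intro sgn_ivp_rhs[OF g2 \<open>c2 \<noteq> 0\<close>]) auto
  qed
  have "sgn c2 = 1 \<or> sgn c2 = -1"
    using \<open>c2 \<noteq> 0\<close> by (simp add: sgn_if)
  from eventually_monotone_if_sgn_deriv[OF deriv_R \<phi>_mono S_in_R \<psi>_mono cont sgn_law this]
  show ?thesis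
    using \<open>r0 < R\<close> by (meson order.strict_trans2)
qed

lemma ivp_eventually_monotone:
  fixes S f1 f2 dpc :: "real \<Rightarrow> real"
  assumes g1: "admissible_g N1 a1 \<alpha>1" and g2: "admissible_g N2 a2 \<alpha>2"
    and "e < 0" and "0 \<le> r0"
    and pos: "\<And>s. s \<in> {0<..<1} \<Longrightarrow> 0 < dpc s \<and> 0 < f1 s \<and> 0 < f2 s"
    and \<phi>_mono: "strict_mono_on {0<..<1} (\<lambda>s. f1 s / f2 s)"
    and \<phi>_cont: "continuous_on {0<..<1} (\<lambda>s. f1 s / f2 s)"
    and S_in: "\<And>r. r0 < r \<Longrightarrow> S r \<in> {0<..<1}"
    and deriv: "\<And>r. r0 < r \<Longrightarrow> (S has_real_derivative
        Gfun N2 a2 \<alpha>2 (c2 * r powr e) * Ffun dpc f2 (S r) - Gfun N1 a1 \<alpha>1 (c1 * r powr e) * Ffun dpc f1 (S r)) (at r)"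
  shows "\<exists>R>r0. mono_on {R<..} S \<or> antimono_on {R<..} S"
proof (cases "c2 = 0")
  case True
  have sgn_const: "sgn (Gfun N2 a2 \<alpha>2 (c2 * r powr e) * Ffun dpc f2 (S r) - Gfun N1 a1 \<alpha>1 (c1 * r powr e) * Ffun dpc f1 (S r))
      = - sgn c1" if "r0 < r" for r
    using True pos[OF S_in[OF that]] sgn_Gfun[OF g1, of "c1 * r powr e"] \<open>0 \<le> r0\<close> that
    by (simp add: Gfun_def[of N2] Ffun_def sgn_mult)
  have "mono_on {r0<..} S \<or> antimono_on {r0<..} S"
    using monotone_if_sgn_deriv_const[OF deriv sgn_const] .
  then show ?thesis
    by (intro exI[of _ "r0 + 1"]) (auto intro: monotone_on_subset)
next
  case False
  then show ?thesis
    by (rule ivp_eventually_monotone_if_c2_neq_0[OF g1 g2 _ assms(3,4)]) (fact pos \<phi>_mono \<phi>_cont S_in deriv)+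
qed

lemma ratio_of_increasing_decreasing_on_01:
  fixes f1 f2 f1' f2' :: "real \<Rightarrow> real"
  assumes f1c: "continuous_on {0..1} f1" and f2c: "continuous_on {0..1} f2"
    and f1C1: "C1_on_01 f1 f1'" and f2C1: "C1_on_01 f2 f2'"
    and f10: "f1 0 = 0" and f21: "f2 1 = 0"
    and f1pos: "\<forall>x\<in>{0<..<1}. f1' x > 0" and f2neg: "\<forall>x\<in>{0<..<1}. f2' x < 0"
  shows "\<And>s. s \<in> {0<..<1} \<Longrightarrow> 0 < f1 s \<and> 0 < f2 s"
    and "strict_mono_on {0<..<1} (\<lambda>s. f1 s / f2 s)"
    and "continuous_on {0<..<1} (\<lambda>s. f1 s / f2 s)"
proof -
  have f1_mono: "strict_mono_on {0..1} f1"
    using f1c f1C1 f1pos by (intro strict_mono_on_Icc_if_deriv_pos[of 0 1 f1 f1']) (auto simp: C1_on_01_def)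
  have f2_anti: "strict_mono_on {0..1} (\<lambda>s. - f2 s)"
    using f2c f2C1 f2neg by (intro strict_mono_on_Icc_if_deriv_pos[of 0 1 _ "\<lambda>s. - f2' s"])
      (auto simp: C1_on_01_def intro: continuous_intros DERIV_minus)
  show pos: "0 < f1 s \<and> 0 < f2 s" if "s \<in> {0<..<1}" for s
    using strict_mono_onD[OF f1_mono, of 0 s] strict_mono_onD[OF f2_anti, of s 1] that f10 f21 by auto
  show "strict_mono_on {0<..<1} (\<lambda>s. f1 s / f2 s)"
    using pos by (intro strict_mono_on_divide monotone_on_subset[OF f1_mono] monotone_on_subset[OF f2_anti]) auto
  show "continuous_on {0<..<1} (\<lambda>s. f1 s / f2 s)"
    using pos by (intro continuous_on_divide continuous_on_subset[OF f1c] continuous_on_subset[OF f2c])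
      (auto intro!: less_imp_neq[symmetric])
qed

theorem theorem2p3:
  fixes n N1 N2 :: nat
    and a1 a2 \<alpha>1 \<alpha>2 :: "nat \<Rightarrow> real"
    and f1 f2 f1' f2' dpc dpc' :: "real \<Rightarrow> real"
    and r0 c1 c2 s0 :: real
    and S :: "real \<Rightarrow> real"
  assumes n: "n \<ge> 2"
    and g1: "admissible_g N1 a1 \<alpha>1" and g2: "admissible_g N2 a2 \<alpha>2"
    \<comment> \<open>Assumption A\<close>
    and f1c: "continuous_on {0..1} f1" and f2c: "continuous_on {0..1} f2"
    and f1C1: "C1_on_01 f1 f1'" and f2C1: "C1_on_01 f2 f2'"
    and f10: "f1 0 = 0" and f21: "f2 1 = 0"
    and f1pos: "\<forall>x\<in>{0<..<1}. f1' x > 0" and f2neg: "\<forall>x\<in>{0<..<1}. f2' x < 0"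
    \<comment> \<open>Assumption B\<close>
    and pcC1: "C1_on_01 dpc dpc'" and pcpos: "\<forall>x\<in>{0<..<1}. dpc x > 0"
    and r0: "r0 > 0" and s0: "s0 \<in> {0<..<1}"
    and Scont: "continuous_on {r0..} S"
    and Sinit: "S r0 = s0"
    and Sbounds: "\<forall>r\<ge>r0. 0 < S r \<and> S r < 1"
    and Sode: "\<forall>r>r0. (S has_real_derivative
        (Gfun N2 a2 \<alpha>2 (c2 * r powr (1 - real n)) * Ffun dpc f2 (S r)
         - Gfun N1 a1 \<alpha>1 (c1 * r powr (1 - real n)) * Ffun dpc f1 (S r))) (at r)"
  shows "(\<exists>R>r0. mono_on {R<..} S \<or> antimono_on {R<..} S)
         \<and> (\<exists>s_inf\<in>{0..1}. (S \<longlongrightarrow> s_inf) at_top)"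
proof -
  note f_pos = ratio_of_increasing_decreasing_on_01(1)[OF f1c f2c f1C1 f2C1 f10 f21 f1pos f2neg]
  note \<phi> = ratio_of_increasing_decreasing_on_01(2,3)[OF f1c f2c f1C1 f2C1 f10 f21 f1pos f2neg]
  have pos: "0 < dpc s \<and> 0 < f1 s \<and> 0 < f2 s" if "s \<in> {0<..<1}" for s
    using f_pos[OF that] pcpos that by simp
  have S_in: "S r \<in> {0<..<1}" if "r0 < r" for r
    using Sbounds that by simp
  have "1 - real n < 0"
    using n by simp
  then obtain R where "r0 < R" and mono: "mono_on {R<..} S \<or> antimono_on {R<..} S"
    using ivp_eventually_monotone[OF g1 g2 _ less_imp_le[OF r0] pos \<phi> S_in Sode[rule_format]] by blast
  have "S r \<in> {0..1}" if "R < r" for r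
    using S_in[of r] \<open>r0 < R\<close> that by auto
  then have "\<exists>s_inf\<in>{0..1}. (S \<longlongrightarrow> s_inf) at_top"
    by (rule eventually_monotone_tendsto_at_top[OF mono])
  with \<open>r0 < R\<close> mono show ?thesis
    by blast
qed

end
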